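(* Let $\mathsf{R}$ be a commutative ring, $n\ge 1$, $D$, $m$ positive integers, $0<\mu<1$, and $\ell\ge 1$. If a finite set $A \subseteq \mathsf{R}$ is an $(n,D,m,\mu)$-diversifying set, then $A^\ell \subseteq \mathsf{R}^\ell$ is an $(n,D,m,\mu^\ell)$-diversifying set, where addition and multiplication in $\mathsf{R}^\ell$ are componentwise (so a polynomial $h\in\mathsf{R}[x_1,\ldots,x_n]$ evaluated at $\boldsymbol\beta=(\boldsymbol\alpha_1,\ldots,\boldsymbol\alpha_\ell)$, with $\boldsymbol\alpha_k\in A^n$, gives $h(\boldsymbol\beta) = (h(\boldsymbol\alpha_1),\ldots,h(\boldsymbol\alpha_\ell))\in\mathsf{R}^\ell$, which is nonzero iff some component is nonzero).
   Context: Definition (diversifying set): For $n\ge 1$, bounds $D,m$ and $0<\mu<1$, a finite set $A$ of evaluation values is an $(n,D,m,\mu)$-diversifying set if for every set $\mathcal{H}\subseteq\mathsf{R}[x_1,\ldots,x_n]$ of nonzero polynomials with $\#\mathcal{H}\le m$ and each $h\in\mathcal{H}$ having max degree less than $D$ (every variable appears with exponent less than $D$), we have $\Pr_{\boldsymbol\alpha\in A^n}[h(\boldsymbol\alpha)\ne 0 \text{ for all } h\in\mathcal{H}] \ge 1-\mu$, where $\boldsymbol\alpha$ is chosen uniformly at random from $A^n$. *)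

theory Defs
  imports Complex_Main "HOL-Library.Poly_Mapping" "HOL-Library.FuncSet"
begin

text \<open>Variables x_1..x_n are indexed 0..n-1.\<close>

type_synonym 'a mpoly = "(nat \<Rightarrow>\<^sub>0 nat) \<Rightarrow>\<^sub>0 'a"

definition mpoly_in_vars :: "nat \<Rightarrow> ('a::zero) mpoly \<Rightarrow> bool" where
  "mpoly_in_vars n h \<longleftrightarrow> (\<forall>mo \<in> Poly_Mapping.keys h. Poly_Mapping.keys mo \<subseteq> {..<n})"

definition max_deg_lt :: "nat \<Rightarrow> ('a::zero) mpoly \<Rightarrow> bool" where
  "max_deg_lt D h \<longleftrightarrow> (\<forall>mo \<in> Poly_Mapping.keys h. \<forall>i. Poly_Mapping.lookup mo i < D)"

definition mpoly_eval :: "('a::comm_ring_1) mpoly \<Rightarrow> (nat \<Rightarrow> 'a) \<Rightarrow> 'a" where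
  "mpoly_eval h x = (\<Sum>mo \<in> Poly_Mapping.keys h. Poly_Mapping.lookup h mo * (\<Prod>i \<in> Poly_Mapping.keys mo. x i ^ Poly_Mapping.lookup mo i))"

definition admissible_family :: "nat \<Rightarrow> nat \<Rightarrow> nat \<Rightarrow> ('a::comm_ring_1) mpoly set \<Rightarrow> bool" where
  "admissible_family n D m H \<longleftrightarrow> finite H \<and> card H \<le> m \<and>
     (\<forall>h \<in> H. h \<noteq> 0 \<and> mpoly_in_vars n h \<and> max_deg_lt D h)"

text \<open>(n,D,m,mu)-diversifying set; probability = uniform over A^n (points
  of A^n as extensional functions on {..<n}).\<close>
definition diversifying :: "nat \<Rightarrow> nat \<Rightarrow> nat \<Rightarrow> real \<Rightarrow> 'a::comm_ring_1 set \<Rightarrow> bool" where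
  "diversifying n D m \<mu> A \<longleftrightarrow> finite A \<and>
     (\<forall>H. admissible_family n D m H \<longrightarrow>
        real (card {\<alpha> \<in> PiE {..<n} (\<lambda>_. A). \<forall>h \<in> H. mpoly_eval h \<alpha> \<noteq> 0})
          / real (card (PiE {..<n} (\<lambda>_. A))) \<ge> 1 - \<mu>)"

text \<open>A^l \<subseteq> R^l is (n,D,m,mu)-diversifying, with polynomials h \<in> R[x] evaluated
  componentwise at beta = (alpha_1,..,alpha_l), alpha_k \<in> A^n; h(beta) \<noteq> 0 iff some
  component h(alpha_k) \<noteq> 0. beta is uniform over (A^n)^l.\<close>
definition diversifying_pow :: "nat \<Rightarrow> nat \<Rightarrow> nat \<Rightarrow> nat \<Rightarrow> real \<Rightarrow> 'a::comm_ring_1 set \<Rightarrow> bool" where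
  "diversifying_pow l n D m \<mu> A \<longleftrightarrow> finite A \<and>
     (\<forall>H. admissible_family n D m H \<longrightarrow>
        real (card {\<beta> \<in> PiE {..<l} (\<lambda>_. PiE {..<n} (\<lambda>_. A)).
                      \<forall>h \<in> H. \<exists>k<l. mpoly_eval h (\<beta> k) \<noteq> 0})
          / real (card (PiE {..<l} (\<lambda>_. PiE {..<n} (\<lambda>_. A)))) \<ge> 1 - \<mu>)"

end

theory Submission
  imports Defs
begin

text \<open>A tuple \<open>(\<alpha>\<^sub>1, \<dots>, \<alpha>\<^sub>\<ell>)\<close> is bad for the family \<open>H\<close> only if some single \<open>h \<in> H\<close>
  vanishes at every \<open>\<alpha>\<^sub>k\<close>; then every \<open>\<alpha>\<^sub>k\<close> is bad for \<open>H\<close>. Hence the bad tuples lie in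
  \<open>B\<^sup>\<ell>\<close>, where \<open>B \<subseteq> A\<^sup>n\<close> is the bad set of \<open>A\<close>, and \<open>|B| \<le> \<mu> |A\<^sup>n|\<close> gives the
  bound \<open>\<mu>\<^sup>\<ell>\<close> on the probability of a bad tuple.\<close>

lemma ratio_ge_one_minus_iff_card_compl_le:
  assumes "finite P" and "card P > 0"
  shows "1 - \<mu> \<le> real (card {x \<in> P. Q x}) / real (card P)
     \<longleftrightarrow> real (card {x \<in> P. \<not> Q x}) \<le> \<mu> * real (card P)"
proof -
  have "card {x \<in> P. Q x} + card {x \<in> P. \<not> Q x} = card P"
    using assms(1) by (subst card_Un_disjoint[symmetric]) (auto intro: arg_cong[where f = card])
  then have "real (card {x \<in> P. Q x}) = real (card P) - real (card {x \<in> P. \<not> Q x})"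
    by linarith
  moreover have "1 - \<mu> \<le> real (card {x \<in> P. Q x}) / real (card P)
      \<longleftrightarrow> (1 - \<mu>) * real (card P) \<le> real (card {x \<in> P. Q x})"
    using assms(2) by (simp add: pos_le_divide_eq)
  moreover have "(1 - \<mu>) * real (card P) = real (card P) - \<mu> * real (card P)"
    by (simp add: algebra_simps)
  ultimately show ?thesis
    by linarith
qed

lemma card_PiE_common_witness_le:
  assumes "finite I" and "finite P"
  shows "card {\<beta> \<in> PiE I (\<lambda>_. P). \<exists>h \<in> H. \<forall>k \<in> I. F h (\<beta> k)}
           \<le> card {\<alpha> \<in> P. \<exists>h \<in> H. F h \<alpha>} ^ card I"
proof -
  have "{\<beta> \<in> PiE I (\<lambda>_. P). \<exists>h \<in> H. \<forall>k \<in> I. F h (\<beta> k)}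
          \<subseteq> PiE I (\<lambda>_. {\<alpha> \<in> P. \<exists>h \<in> H. F h \<alpha>})"
    by (auto simp: PiE_iff intro: extensional_arb)
  then have "card {\<beta> \<in> PiE I (\<lambda>_. P). \<exists>h \<in> H. \<forall>k \<in> I. F h (\<beta> k)}
               \<le> card (PiE I (\<lambda>_. {\<alpha> \<in> P. \<exists>h \<in> H. F h \<alpha>}))"
    using assms by (intro card_mono) (auto intro: finite_PiE)
  also have "\<dots> = card {\<alpha> \<in> P. \<exists>h \<in> H. F h \<alpha>} ^ card I"
    using assms(1) by (simp add: card_PiE)
  finally show ?thesis .
qed

text \<open>For empty \<open>A\<^sup>n\<close> the ratio in \<^const>\<open>diversifying\<close> is \<open>0 / 0 = 0\<close>, which \<open>\<mu> < 1\<close> excludes.\<close>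

lemma diversifying_points_nonempty:
  assumes "diversifying n D m \<mu> A" and "\<mu> < 1"
  shows "card (PiE {..<n} (\<lambda>_. A)) > 0"
proof (rule ccontr)
  assume "\<not> ?thesis"
  moreover have "admissible_family n D m ({} :: 'a mpoly set)"
    by (simp add: admissible_family_def)
  ultimately show False
    using assms unfolding diversifying_def by fastforce
qed

lemma diversifying_card_bad_le:
  assumes "diversifying n D m \<mu> A" and "\<mu> < 1" and "admissible_family n D m H"
  shows "real (card {\<alpha> \<in> PiE {..<n} (\<lambda>_. A). \<exists>h \<in> H. mpoly_eval h \<alpha> = 0})
           \<le> \<mu> * real (card (PiE {..<n} (\<lambda>_. A)))"
proof -
  have "finite (PiE {..<n} (\<lambda>_. A))"
    using assms(1) by (simp add: diversifying_def finite_PiE)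
  moreover have "1 - \<mu> \<le> real (card {\<alpha> \<in> PiE {..<n} (\<lambda>_. A). \<forall>h \<in> H. mpoly_eval h \<alpha> \<noteq> 0})
                          / real (card (PiE {..<n} (\<lambda>_. A)))"
    using assms(1,3) by (simp add: diversifying_def)
  ultimately show ?thesis
    using ratio_ge_one_minus_iff_card_compl_le[where Q = "\<lambda>\<alpha>. \<forall>h \<in> H. mpoly_eval h \<alpha> \<noteq> 0"]
      diversifying_points_nonempty[OF assms(1,2)]
    by simp
qed

theorem lemma4p5:
  fixes A :: "'a::comm_ring_1 set" and n D m l :: nat and \<mu> :: real
  assumes "n \<ge> 1" and "D > 0" and "m > 0" and "0 < \<mu>" and "\<mu> < 1" and "l \<ge> 1"
    and "diversifying n D m \<mu> A"
  shows "diversifying_pow l n D m (\<mu> ^ l) A"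
  unfolding diversifying_pow_def
proof (intro conjI allI impI)
  show "finite A" using assms(7) by (simp add: diversifying_def)
  define P where "P = PiE {..<n} (\<lambda>_. A)"
  define Q where "Q = PiE {..<l} (\<lambda>_. P)"
  have "finite P" unfolding P_def using \<open>finite A\<close> by (simp add: finite_PiE)
  have "card P > 0" unfolding P_def using diversifying_points_nonempty assms(5,7) by blast
  have "finite Q" and card_Q: "card Q = card P ^ l"
    unfolding Q_def using \<open>finite P\<close> by (simp_all add: finite_PiE card_PiE)
  fix H :: "'a mpoly set"
  assume "admissible_family n D m H"
  have "{\<beta> \<in> Q. \<not> (\<forall>h \<in> H. \<exists>k<l. mpoly_eval h (\<beta> k) \<noteq> 0)}
          = {\<beta> \<in> Q. \<exists>h \<in> H. \<forall>k \<in> {..<l}. mpoly_eval h (\<beta> k) = 0}"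
    by auto
  then have "card {\<beta> \<in> Q. \<not> (\<forall>h \<in> H. \<exists>k<l. mpoly_eval h (\<beta> k) \<noteq> 0)}
               \<le> card {\<alpha> \<in> P. \<exists>h \<in> H. mpoly_eval h \<alpha> = 0} ^ l"
    unfolding Q_def using card_PiE_common_witness_le[OF finite_lessThan \<open>finite P\<close>] by simp
  then have "real (card {\<beta> \<in> Q. \<not> (\<forall>h \<in> H. \<exists>k<l. mpoly_eval h (\<beta> k) \<noteq> 0)})
               \<le> real (card {\<alpha> \<in> P. \<exists>h \<in> H. mpoly_eval h \<alpha> = 0}) ^ l"
    by (simp flip: of_nat_power)
  also have "\<dots> \<le> (\<mu> * real (card P)) ^ l"
    unfolding P_def
    by (intro power_mono diversifying_card_bad_le[OF assms(7,5)] \<open>admissible_family n D m H\<close>) simp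
  also have "\<dots> = \<mu> ^ l * real (card Q)"
    by (simp add: card_Q power_mult_distrib)
  finally have "1 - \<mu> ^ l \<le> real (card {\<beta> \<in> Q. \<forall>h \<in> H. \<exists>k<l. mpoly_eval h (\<beta> k) \<noteq> 0})
                              / real (card Q)"
    using \<open>card P > 0\<close> card_Q by (intro ratio_ge_one_minus_iff_card_compl_le[OF \<open>finite Q\<close>, THEN iffD2]) simp_all
  then show "1 - \<mu> ^ l \<le> real (card {\<beta> \<in> PiE {..<l} (\<lambda>_. PiE {..<n} (\<lambda>_. A)).
                      \<forall>h \<in> H. \<exists>k<l. mpoly_eval h (\<beta> k) \<noteq> 0})
          / real (card (PiE {..<l} (\<lambda>_. PiE {..<n} (\<lambda>_. A))))"
    unfolding Q_def P_def .
qed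

end
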